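(* For all $n\ge1$ and $k\ge0$, the map sending a word $x_n\cdots x_1\in L_{\mathrm{Rect}}$ to $\psi_{x_n}\circ\cdots\circ\psi_{x_1}(e_0)$ restricts to a bijection from the set of words in $L_{\mathrm{Rect}}$ of length $n$ containing exactly $k$ occurrences of the letter $d$ onto the set of rectangular permutations in $S_n$ with exactly $k$ recoils.
   Context: A permutation is rectangular if it avoids $2413,2431,4213,4231$; a recoil of $\pi\in S_n$ is $i\in\{1,\dots,n-1\}$ with $\pi^{-1}_i>\pi^{-1}_{i+1}$; $e_0$ is the empty permutation. For $\pi\in S_n$ (one-line form) and $1\le i,j\le n+1$, $\rho_{i,j}(\pi)\in S_{n+1}$ is obtained by increasing by $1$ every entry $\ge i$ and inserting the value $i$ at position $j$. Operators: $\psi_1=\rho_{1,1}$, domain all rectangular permutations (including $e_0$); $\psi_2=\rho_{1,2}$, domain rectangular $\pi$ of size $\ge1$ with $\pi_1\ne1$; $\psi_u(\pi)=\rho_{\pi_1,1}(\pi)$, same domain as $\psi_2$; $\psi_d(\pi)=\rho_{\pi_1+1,1}(\pi)$, domain rectangular $\pi$ of size $\ge1$. A word $x_m\cdots x_1$ over $\{1,2,u,d\}$ stands for $\psi_{x_m}\circ\cdots\circ\psi_{x_1}$ (rightmost applied first); $L_{\mathrm{Rect}}$ is the set of words of length $m\ge1$ for which this composition applied to $e_0$ is defined (each operator applied within its domain). *)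

theory Defs
  imports Main
begin

definition perms :: "nat \<Rightarrow> nat list set" where
  "perms n = {p. length p = n \<and> distinct p \<and> set p = {1..n}}"

definition contains_pattern :: "nat list \<Rightarrow> nat list \<Rightarrow> bool" where
  "contains_pattern p s \<longleftrightarrow>
     (\<exists>idx. length idx = length s \<and> sorted_wrt (<) idx \<and> (\<forall>a\<in>set idx. a < length p) \<and>
        (\<forall>a < length s. \<forall>b < length s. (p ! (idx ! a) < p ! (idx ! b)) \<longleftrightarrow> (s ! a < s ! b)))"

definition avoids :: "nat list \<Rightarrow> nat list \<Rightarrow> bool" where
  "avoids p s \<longleftrightarrow> \<not> contains_pattern p s"

definition rectangular :: "nat list \<Rightarrow> bool" where
  "rectangular p \<longleftrightarrow> avoids p [2,4,1,3] \<and> avoids p [2,4,3,1] \<and> avoids p [4,2,1,3] \<and> avoids p [4,2,3,1]"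

definition recoils :: "nat list \<Rightarrow> nat set" where
  "recoils p = {i. 1 \<le> i \<and> i \<le> length p - 1 \<and>
      (\<exists>a b. a < length p \<and> b < length p \<and> p ! a = i \<and> p ! b = i + 1 \<and> a > b)}"

definition rho :: "nat \<Rightarrow> nat \<Rightarrow> nat list \<Rightarrow> nat list" where
  "rho i j p = (let q = map (\<lambda>x. if x \<ge> i then x + 1 else x) p
                in take (j - 1) q @ [i] @ drop (j - 1) q)"

datatype letter = L1 | L2 | Lu | Ld

fun psi :: "letter \<Rightarrow> nat list \<Rightarrow> nat list option" where
  "psi L1 p = (if rectangular p then Some (rho 1 1 p) else None)"
| "psi L2 p = (if rectangular p \<and> length p \<ge> 1 \<and> hd p \<noteq> 1 then Some (rho 1 2 p) else None)"
| "psi Lu p = (if rectangular p \<and> length p \<ge> 1 \<and> hd p \<noteq> 1 then Some (rho (hd p) 1 p) else None)"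
| "psi Ld p = (if rectangular p \<and> length p \<ge> 1 then Some (rho (hd p + 1) 1 p) else None)"

(* A word x_m ... x_1 is the list [x_m, ..., x_1]; x_1 (last element) is applied first to e_0 = [] *)
fun eval_word :: "letter list \<Rightarrow> nat list option" where
  "eval_word [] = Some []"
| "eval_word (x # w) = Option.bind (eval_word w) (psi x)"

definition L_Rect :: "letter list set" where
  "L_Rect = {w. length w \<ge> 1 \<and> eval_word w \<noteq> None}"

end

theory Submission
  imports Defs
begin

text \<open>
  A permutation contains one of 2413, 2431, 4213, 4231 iff it has a \<^emph>\<open>crossing\<close>: entries
  \<open>a, b, c, d\<close> in this order with \<open>min c d < min a b < max c d < max a b\<close>.
  The operators \<open>\<psi>\<^sub>1\<close>, \<open>\<psi>\<^sub>2\<close> insert the minimum at position 1 or 2, where it cannot lie in a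
  crossing; \<open>\<psi>\<^sub>u\<close>, \<open>\<psi>\<^sub>d\<close> put in front a value consecutive to the old first entry, and in a
  crossing through the new entry the old one could take its place. So all operators preserve
  rectangularity. Conversely, a rectangular permutation starts with 1, has 1 in second
  position, or starts with two consecutive values, since otherwise 1 and the successor of the
  smaller of its first two entries form a crossing with them. The case tells which operator
  produced it, and deleting the inserted entry gives the unique rectangular preimage; hence
  evaluation of words of length \<open>n\<close> is a bijection onto the rectangular permutations in \<open>S\<^sub>n\<close>.
  Finally only \<open>\<psi>\<^sub>d\<close> creates a recoil, so the number of letters \<open>d\<close> is the number of recoils.
\<close>


section \<open>Crossings\<close>

definition crossing :: "nat \<Rightarrow> nat \<Rightarrow> nat \<Rightarrow> nat \<Rightarrow> bool" where
  "crossing a b c d \<longleftrightarrow> min c d < min a b \<and> min a b < max c d \<and> max c d < max a b"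

definition has_crossing :: "nat list \<Rightarrow> bool" where
  "has_crossing p \<longleftrightarrow> (\<exists>i0 i1 i2 i3. i0 < i1 \<and> i1 < i2 \<and> i2 < i3 \<and> i3 < length p \<and>
     crossing (p!i0) (p!i1) (p!i2) (p!i3))"

lemma contains_pattern_length4:
  "contains_pattern p [s0,s1,s2,s3] \<longleftrightarrow>
   (\<exists>i0 i1 i2 i3. i0 < i1 \<and> i1 < i2 \<and> i2 < i3 \<and> i3 < length p \<and>
     (\<forall>a<4. \<forall>b<4. ([p!i0,p!i1,p!i2,p!i3]!a < [p!i0,p!i1,p!i2,p!i3]!b) \<longleftrightarrow> ([s0,s1,s2,s3]!a < [s0,s1,s2,s3]!b)))"
proof -
  have nth4: "p!([i0,i1,i2,i3]!a) = [p!i0,p!i1,p!i2,p!i3]!a" if "a < 4" for i0 i1 i2 i3 a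
    using that by (auto simp: numeral_eq_Suc less_Suc_eq)
  have ex4: "(\<exists>idx. length idx = 4 \<and> Q idx) \<longleftrightarrow> (\<exists>i0 i1 i2 i3. Q [i0,i1,i2,i3])"
    for Q :: "nat list \<Rightarrow> bool"
  proof
    show "\<exists>i0 i1 i2 i3. Q [i0,i1,i2,i3]" if "\<exists>idx. length idx = 4 \<and> Q idx"
      using that by (auto simp: length_Suc_conv numeral_eq_Suc)
  next
    assume "\<exists>i0 i1 i2 i3. Q [i0,i1,i2,i3]"
    then obtain i0 i1 i2 i3 where "Q [i0,i1,i2,i3]" by blast
    then show "\<exists>idx. length idx = 4 \<and> Q idx" by (intro exI[of _ "[i0,i1,i2,i3]"]) simp
  qed
  have order4: "(\<forall>a<4. \<forall>b<4. (p!([i0,i1,i2,i3]!a) < p!([i0,i1,i2,i3]!b)) \<longleftrightarrow> P a b) \<longleftrightarrow>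
      (\<forall>a<4. \<forall>b<4. ([p!i0,p!i1,p!i2,p!i3]!a < [p!i0,p!i1,p!i2,p!i3]!b) \<longleftrightarrow> P a b)" for i0 i1 i2 i3 P
    by (simp add: nth4)
  have sorted4: "sorted_wrt (<) [i0,i1,i2,i3] \<and> (\<forall>a\<in>set [i0,i1,i2,i3]. a < length p) \<and> R \<longleftrightarrow>
      i0 < i1 \<and> i1 < i2 \<and> i2 < i3 \<and> i3 < length p \<and> R" for i0 i1 i2 i3 R
    by auto
  have "length [s0,s1,s2,s3] = (4::nat)" by simp
  then show ?thesis
    unfolding contains_pattern_def by (simp only: ex4 order4 sorted4)
qed

lemma order_isomorphic4:
  "(\<forall>a<4. \<forall>b<4. ([x0,x1,x2,x3::nat]!a < [x0,x1,x2,x3]!b) \<longleftrightarrow> ([s0,s1,s2,s3::nat]!a < [s0,s1,s2,s3]!b)) \<longleftrightarrow>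
   (x0<x1 \<longleftrightarrow> s0<s1) \<and> (x0<x2 \<longleftrightarrow> s0<s2) \<and> (x0<x3 \<longleftrightarrow> s0<s3) \<and>
   (x1<x0 \<longleftrightarrow> s1<s0) \<and> (x1<x2 \<longleftrightarrow> s1<s2) \<and> (x1<x3 \<longleftrightarrow> s1<s3) \<and>
   (x2<x0 \<longleftrightarrow> s2<s0) \<and> (x2<x1 \<longleftrightarrow> s2<s1) \<and> (x2<x3 \<longleftrightarrow> s2<s3) \<and>
   (x3<x0 \<longleftrightarrow> s3<s0) \<and> (x3<x1 \<longleftrightarrow> s3<s1) \<and> (x3<x2 \<longleftrightarrow> s3<s2)"
proof -
  have "(\<forall>a<4. P a) \<longleftrightarrow> P 0 \<and> P 1 \<and> P 2 \<and> P 3" for P :: "nat \<Rightarrow> bool"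
    by (auto simp: numeral_eq_Suc less_Suc_eq)
  then show ?thesis by simp
qed

lemma crossing_iff:
  "crossing a b c d \<longleftrightarrow>
     (c < a \<and> a < d \<and> d < b) \<or> (d < a \<and> a < c \<and> c < b) \<or>
     (c < b \<and> b < d \<and> d < a) \<or> (d < b \<and> b < c \<and> c < a)"
  by (auto simp: crossing_def min_def max_def)

lemma rectangular_iff_no_crossing: "rectangular p \<longleftrightarrow> \<not> has_crossing p"
proof -
  let ?iso = "\<lambda>xs s. \<forall>a<4. \<forall>b<4. (xs!a < xs!b) \<longleftrightarrow> (s!a < (s::nat list)!b)"
  have "?iso [x0,x1,x2,x3] [2,4,1,3] \<longleftrightarrow> x2 < x0 \<and> x0 < x3 \<and> x3 < x1"
    and "?iso [x0,x1,x2,x3] [2,4,3,1] \<longleftrightarrow> x3 < x0 \<and> x0 < x2 \<and> x2 < x1"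
    and "?iso [x0,x1,x2,x3] [4,2,1,3] \<longleftrightarrow> x2 < x1 \<and> x1 < x3 \<and> x3 < x0"
    and "?iso [x0,x1,x2,x3] [4,2,3,1] \<longleftrightarrow> x3 < x1 \<and> x1 < x2 \<and> x2 < x0"
    for x0 x1 x2 x3 :: nat
    unfolding order_isomorphic4 by auto
  then show ?thesis
    unfolding rectangular_def avoids_def contains_pattern_length4 has_crossing_def crossing_iff
    by (simp only: conj_disj_distribL ex_disj_distrib de_Morgan_disj)
qed


section \<open>Insertion of a value\<close>

definition shift :: "nat \<Rightarrow> nat \<Rightarrow> nat" where
  "shift i x = (if i \<le> x then x + 1 else x)"

definition unshift :: "nat \<Rightarrow> nat \<Rightarrow> nat" where
  "unshift k t = (if t < k then t else t - 1)"

lemma shift_eq_iff [simp]: "shift i x = shift i y \<longleftrightarrow> x = y"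
  by (auto simp: shift_def)

lemma shift_less_iff [simp]: "shift i x < shift i y \<longleftrightarrow> x < y"
  by (auto simp: shift_def)

lemma shift_neq [simp]: "shift i x \<noteq> i"
  by (auto simp: shift_def)

lemma shift_unshift: "t \<noteq> k \<Longrightarrow> shift k (unshift k t) = t"
  by (auto simp: shift_def unshift_def)

lemma rho_conv: "rho i j p = take (j - 1) (map (shift i) p) @ i # drop (j - 1) (map (shift i) p)"
  unfolding rho_def shift_def Let_def by simp

text \<open>Stated with \<open>Suc 0\<close>, the simp normal form of \<open>1 :: nat\<close>.\<close>

lemma rho_front: "rho i (Suc 0) p = i # map (shift i) p"
  by (simp add: rho_conv)

lemma rho_2_Cons: "rho i 2 (a # p) = shift i a # i # map (shift i) p"
  by (simp add: rho_conv)

lemma length_rho [simp]: "length (rho i j p) = Suc (length p)"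
  by (simp add: rho_conv)

lemma nth_rho_inserted: "j - 1 \<le> length p \<Longrightarrow> rho i j p ! (j - 1) = i"
  by (simp add: rho_conv nth_append)

lemma nth_rho_shift: "j - 1 \<le> length p \<Longrightarrow> t < length p \<Longrightarrow> rho i j p ! shift (j - 1) t = shift i (p ! t)"
  by (auto simp: rho_conv shift_def nth_append min_def nth_Cons')

lemma nth_rho_unshift:
  assumes "j - 1 \<le> length p" "t \<le> length p" "t \<noteq> j - 1"
  shows "rho i j p ! t = shift i (p ! unshift (j - 1) t)"
proof -
  have "unshift (j - 1) t < length p"
    using assms by (auto simp: unshift_def)
  then show ?thesis
    using nth_rho_shift[OF assms(1)] shift_unshift[OF assms(3)] by metis
qed

lemma rho_inj:
  assumes "rho i j p = rho i' j p'" "length p = length p'" "j - 1 \<le> length p"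
  shows "i = i' \<and> p = p'"
proof
  show "i = i'"
    using nth_rho_inserted[of j p i] nth_rho_inserted[of j p' i'] assms by simp
  show "p = p'"
  proof (rule nth_equalityI)
    fix t assume "t < length p"
    then have "shift i (p ! t) = shift i (p' ! t)"
      using nth_rho_shift[of j p t i] nth_rho_shift[of j p' t i'] assms \<open>i = i'\<close> by simp
    then show "p ! t = p' ! t" by simp
  qed fact
qed

lemma perms_iff: "p \<in> perms n \<longleftrightarrow> length p = n \<and> distinct p \<and> set p \<subseteq> {1..n}"
proof
  assume "length p = n \<and> distinct p \<and> set p \<subseteq> {1..n}"
  then have "card (set p) = card {1..n}" "set p \<subseteq> {1..n}" "length p = n" "distinct p"
    by (auto simp: distinct_card)
  then show "p \<in> perms n" unfolding perms_def using card_subset_eq by blast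
qed (auto simp: perms_def)

lemma perms_0: "perms 0 = {[]}"
  by (auto simp: perms_def)

lemma length_perm: "p \<in> perms n \<Longrightarrow> length p = n"
  by (simp add: perms_def)

lemma perm_nth_bounds: "p \<in> perms n \<Longrightarrow> t < n \<Longrightarrow> 1 \<le> p ! t \<and> p ! t \<le> n"
  unfolding perms_def using nth_mem by fastforce

lemma perm_nth_eq_iff: "p \<in> perms n \<Longrightarrow> s < n \<Longrightarrow> t < n \<Longrightarrow> p ! s = p ! t \<longleftrightarrow> s = t"
  unfolding perms_def using nth_eq_iff_index_eq by auto

lemma perm_obtain_index:
  assumes "p \<in> perms n" "1 \<le> v" "v \<le> n"
  obtains t where "t < n" "p ! t = v"
proof -
  have "v \<in> set p" "length p = n"
    using assms by (auto simp: perms_def)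
  then show ?thesis using that by (auto simp: in_set_conv_nth)
qed

lemma set_rho: "set (rho i j p) = insert i (shift i ` set p)"
proof -
  have "set (take k q @ i # drop k q) = insert i (set (take k q @ drop k q))" for k q
    by (simp only: set_append set_simps) blast
  then show ?thesis by (simp add: rho_conv)
qed

lemma distinct_rho: "distinct (rho i j p) \<longleftrightarrow> distinct p"
proof -
  have "distinct (A @ i # B) \<longleftrightarrow> distinct (i # A @ B)" for A B
    by (auto simp: distinct_append)
  then show ?thesis
    by (simp only: rho_conv append_take_drop_id) (auto simp: distinct_map inj_on_def shift_def)
qed

lemma rho_in_perms: "p \<in> perms n \<Longrightarrow> 1 \<le> i \<Longrightarrow> i \<le> Suc n \<Longrightarrow> rho i j p \<in> perms (Suc n)"
  unfolding perms_iff set_rho distinct_rho by (auto simp: shift_def)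

lemma in_perms_if_rho:
  assumes "rho i j p \<in> perms (Suc n)" "length p = n"
  shows "p \<in> perms n"
proof -
  have "x \<in> {1..n}" if "x \<in> set p" for x
  proof -
    have "shift i x \<in> {1..Suc n}" "i \<in> {1..Suc n}"
      using assms that unfolding perms_iff set_rho by auto
    then show ?thesis by (auto simp: shift_def split: if_splits)
  qed
  then show ?thesis
    using assms unfolding perms_iff distinct_rho by auto
qed

lemma ex_rho_eq:
  assumes "\<sigma> \<in> perms m" "1 \<le> j" "j \<le> m"
  shows "\<exists>p. length p = m - 1 \<and> rho (\<sigma> ! (j - 1)) j p = \<sigma>"
proof -
  define k where "k = j - 1"
  define i where "i = \<sigma> ! k"
  define r where "r = take k \<sigma> @ drop (Suc k) \<sigma>"
  define p where "p = map (\<lambda>v. if v > i then v - 1 else v) r"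
  have "k < m" "length \<sigma> = m" "distinct \<sigma>"
    using assms by (auto simp: k_def perms_def)
  then have \<sigma>_split: "\<sigma> = take k \<sigma> @ i # drop (Suc k) \<sigma>"
    unfolding i_def by (simp add: id_take_nth_drop)
  have "distinct (take k \<sigma> @ i # drop (Suc k) \<sigma>)"
    using \<open>distinct \<sigma>\<close> by (subst (asm) \<sigma>_split)
  then have "i \<notin> set r"
    unfolding r_def by auto
  then have "map (shift i) p = r"
    unfolding p_def map_map by (intro map_idI) (auto simp: shift_def)
  then have "rho i j p = take k \<sigma> @ i # drop (Suc k) \<sigma>"
    using \<open>k < m\<close> \<open>length \<sigma> = m\<close> by (simp add: rho_conv k_def r_def)
  moreover have "length p = m - 1"
    using \<open>k < m\<close> \<open>length \<sigma> = m\<close> by (simp add: p_def r_def)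
  ultimately show ?thesis
    using \<sigma>_split unfolding i_def k_def by auto
qed

lemma crossing_shift [simp]:
  "crossing (shift i a) (shift i b) (shift i c) (shift i d) \<longleftrightarrow> crossing a b c d"
  by (simp add: crossing_iff)

lemma has_crossing_rho:
  assumes "has_crossing p" "j - 1 \<le> length p"
  shows "has_crossing (rho i j p)"
proof -
  obtain i0 i1 i2 i3 where idx: "i0 < i1" "i1 < i2" "i2 < i3" "i3 < length p"
    and cross: "crossing (p ! i0) (p ! i1) (p ! i2) (p ! i3)"
    using assms(1) unfolding has_crossing_def by blast
  let ?k = "shift (j - 1)"
  have vals: "rho i j p ! ?k t = shift i (p ! t)" if "t \<le> i3" for t
    using that idx by (intro nth_rho_shift[OF assms(2)]) auto
  have "?k i3 < length (rho i j p)"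
    using idx by (auto simp: shift_def)
  moreover have "crossing (rho i j p ! ?k i0) (rho i j p ! ?k i1) (rho i j p ! ?k i2) (rho i j p ! ?k i3)"
    using cross idx vals by auto
  ultimately show ?thesis
    unfolding has_crossing_def using idx shift_less_iff by blast
qed

lemma rectangular_unrho: "rectangular (rho i j p) \<Longrightarrow> j - 1 \<le> length p \<Longrightarrow> rectangular p"
  using has_crossing_rho rectangular_iff_no_crossing by blast

lemma has_crossing_unrho:
  assumes "j - 1 \<le> length p" "i0 < i1" "i1 < i2" "i2 < i3" "i3 \<le> length p"
    and "j - 1 \<notin> {i0, i1, i2, i3}"
    and "crossing (rho i j p ! i0) (rho i j p ! i1) (rho i j p ! i2) (rho i j p ! i3)"
  shows "has_crossing p"
proof -
  let ?k = "unshift (j - 1)"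
  have "?k i0 < ?k i1" "?k i1 < ?k i2" "?k i2 < ?k i3" "?k i3 < length p"
    using assms by (auto simp: unshift_def)
  moreover have "crossing (p ! ?k i0) (p ! ?k i1) (p ! ?k i2) (p ! ?k i3)"
    using assms by (simp add: nth_rho_unshift)
  ultimately show ?thesis
    unfolding has_crossing_def by blast
qed

text \<open>In a crossing the first two entries are not the smallest, so an entry 1 at
  position 1 or 2 cannot take part in one.\<close>

lemma rectangular_rho_one:
  assumes "p \<in> perms n" "rectangular p" "j - 1 \<le> 1" "j - 1 \<le> n"
  shows "rectangular (rho 1 j p)"
proof (rule ccontr)
  let ?\<sigma> = "rho 1 j p"
  assume "\<not> rectangular ?\<sigma>"
  then obtain i0 i1 i2 i3 where idx: "i0 < i1" "i1 < i2" "i2 < i3" "i3 < Suc n"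
    and cross: "crossing (?\<sigma> ! i0) (?\<sigma> ! i1) (?\<sigma> ! i2) (?\<sigma> ! i3)"
    using length_perm[OF assms(1)] unfolding rectangular_iff_no_crossing has_crossing_def by auto
  have "?\<sigma> \<in> perms (Suc n)"
    using rho_in_perms[OF assms(1)] by simp
  then have "1 \<le> ?\<sigma> ! i2" "1 \<le> ?\<sigma> ! i3"
    using idx perm_nth_bounds by auto
  moreover have "?\<sigma> ! (j - 1) = 1"
    using nth_rho_inserted[of j p 1] assms length_perm[OF assms(1)] by simp
  ultimately have "j - 1 \<notin> {i0, i1, i2, i3}"
    using idx cross assms(3) by (auto simp: crossing_def)
  then have "has_crossing p"
    using has_crossing_unrho[of j p] idx cross assms length_perm by auto
  then show False
    using assms(2) rectangular_iff_no_crossing by blast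
qed

lemma crossing_consecutive: "crossing a b c d \<Longrightarrow> b = a + 1 \<or> a = b + 1 \<Longrightarrow> False"
  by (auto simp: crossing_def min_def max_def split: if_splits)

lemma crossing_replace_consecutive:
  assumes "crossing a b c d" "a' = a + 1 \<or> a = a' + 1" "a \<notin> {b, c, d}" "a' \<notin> {b, c, d}"
  shows "crossing a' b c d"
  using assms by (auto simp: crossing_def min_def max_def split: if_splits)

text \<open>A crossing cannot contain both of two consecutive values as its first two entries;
  if it contains only the first one, the second one can take its place.\<close>

lemma rectangular_rho_consecutive:
  assumes "p \<in> perms n" "rectangular p" "1 \<le> i" "i \<le> Suc n"
    and "rho i 1 p ! 1 = i + 1 \<or> i = rho i 1 p ! 1 + 1"
  shows "rectangular (rho i 1 p)"
proof (rule ccontr)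
  assume "\<not> rectangular (rho i 1 p)"
  define \<sigma> where "\<sigma> = rho i 1 p"
  have \<sigma>_perm: "\<sigma> \<in> perms (Suc n)"
    unfolding \<sigma>_def using rho_in_perms[OF assms(1,3,4)] .
  have consecutive: "\<sigma> ! 1 = \<sigma> ! 0 + 1 \<or> \<sigma> ! 0 = \<sigma> ! 1 + 1"
    using assms(5) by (simp add: \<sigma>_def rho_front)
  from \<open>\<not> rectangular (rho i 1 p)\<close> obtain i0 i1 i2 i3 where idx: "i0 < i1" "i1 < i2" "i2 < i3" "i3 < Suc n"
    and cross: "crossing (\<sigma> ! i0) (\<sigma> ! i1) (\<sigma> ! i2) (\<sigma> ! i3)"
    using length_perm[OF assms(1)] unfolding rectangular_iff_no_crossing has_crossing_def \<sigma>_def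
    by auto
  obtain k0 where "0 < k0" "k0 < i1" "crossing (\<sigma> ! k0) (\<sigma> ! i1) (\<sigma> ! i2) (\<sigma> ! i3)"
  proof (cases "i0 = 0")
    case True
    then have "i1 \<noteq> 1"
      using crossing_consecutive[OF cross] consecutive by auto
    then have "\<sigma> ! 0 \<notin> {\<sigma> ! i1, \<sigma> ! i2, \<sigma> ! i3}" "\<sigma> ! 1 \<notin> {\<sigma> ! i1, \<sigma> ! i2, \<sigma> ! i3}"
      using perm_nth_eq_iff[OF \<sigma>_perm] idx True by auto
    then have "crossing (\<sigma> ! 1) (\<sigma> ! i1) (\<sigma> ! i2) (\<sigma> ! i3)"
      using crossing_replace_consecutive[of "\<sigma> ! 0"] cross consecutive True by auto
    then show ?thesis
      using that[of 1] \<open>i1 \<noteq> 1\<close> idx True by auto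
  qed (use that idx cross in auto)
  then have "has_crossing p"
    using has_crossing_unrho[of 1 p k0 i1 i2 i3 i] idx length_perm[OF assms(1)]
    unfolding \<sigma>_def by auto
  then show False
    using assms(2) rectangular_iff_no_crossing by blast
qed


section \<open>Recoils\<close>

definition appears_after :: "nat list \<Rightarrow> nat \<Rightarrow> nat \<Rightarrow> bool" where
  "appears_after p x y \<longleftrightarrow> (\<exists>a b. a < length p \<and> b < length p \<and> p ! a = x \<and> p ! b = y \<and> b < a)"

lemma recoils_conv: "recoils p = {r. 1 \<le> r \<and> r \<le> length p - 1 \<and> appears_after p r (r + 1)}"
  unfolding recoils_def appears_after_def by auto

lemma zero_notin_recoils: "0 \<notin> recoils p"
  by (simp add: recoils_conv)

lemma finite_recoils: "finite (recoils p)"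
  by (rule finite_subset[of _ "{1..length p}"]) (auto simp: recoils_conv)

lemma not_appears_after_hd: "distinct p \<Longrightarrow> \<not> appears_after p (p ! 0) y"
  using nth_eq_iff_index_eq[of p _ 0] by (fastforce simp: appears_after_def)

lemma appears_after_hd: "v \<in> set p \<Longrightarrow> v \<noteq> p ! 0 \<Longrightarrow> appears_after p v (p ! 0)"
  unfolding appears_after_def in_set_conv_nth by (metis gr0I length_pos_if_in_set nth_mem)

lemma appears_after_rho:
  assumes "j - 1 \<le> length p"
  shows "appears_after (rho i j p) (shift i x) (shift i y) \<longleftrightarrow> appears_after p x y"
proof
  assume "appears_after p x y"
  then obtain a b where ab: "a < length p" "b < length p" "p ! a = x" "p ! b = y" "b < a"
    unfolding appears_after_def by blast
  let ?k = "shift (j - 1)"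
  have "?k b < ?k a" "?k a < length (rho i j p)" "?k b < length (rho i j p)"
    using ab by (auto simp: shift_def)
  moreover have "rho i j p ! ?k a = shift i x" "rho i j p ! ?k b = shift i y"
    using nth_rho_shift[OF assms] ab by auto
  ultimately show "appears_after (rho i j p) (shift i x) (shift i y)"
    unfolding appears_after_def by blast
next
  assume "appears_after (rho i j p) (shift i x) (shift i y)"
  then obtain a b where ab: "a \<le> length p" "b < a"
    and vals: "rho i j p ! a = shift i x" "rho i j p ! b = shift i y"
    unfolding appears_after_def by (auto simp: less_Suc_eq_le)
  have "a \<noteq> j - 1" "b \<noteq> j - 1"
    using vals nth_rho_inserted[OF assms] shift_neq by metis+
  let ?k = "unshift (j - 1)"
  have "p ! ?k a = x" "p ! ?k b = y"
    using vals nth_rho_unshift[OF assms] ab \<open>a \<noteq> j - 1\<close> \<open>b \<noteq> j - 1\<close> by auto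
  moreover have "?k a < length p" "?k b < length p" "?k b < ?k a"
    using ab assms \<open>a \<noteq> j - 1\<close> \<open>b \<noteq> j - 1\<close> by (auto simp: unshift_def)
  ultimately show "appears_after p x y"
    unfolding appears_after_def by blast
qed

lemma shift_mem_recoils_rho:
  assumes "p \<in> perms n" "1 \<le> i" "i \<le> Suc n" "j - 1 \<le> n" "r \<noteq> i - 1"
  shows "shift (i - 1) r \<in> recoils (rho i j p) \<longleftrightarrow> r \<in> recoils p"
proof -
  have "shift i r = shift (i - 1) r" "shift i (r + 1) = shift (i - 1) r + 1"
    using assms(2,5) by (auto simp: shift_def)
  then have "appears_after (rho i j p) (shift (i - 1) r) (shift (i - 1) r + 1) \<longleftrightarrow>
      appears_after p r (r + 1)"
    using appears_after_rho[of j p i r "r + 1"] assms length_perm[OF assms(1)] by simp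
  moreover have "1 \<le> shift (i - 1) r \<and> shift (i - 1) r \<le> n \<longleftrightarrow> 1 \<le> r \<and> r \<le> n - 1"
    using assms(2,3,5) by (auto simp: shift_def)
  ultimately show ?thesis
    using length_perm[OF assms(1)] unfolding recoils_conv by auto
qed

lemma recoils_rho:
  assumes "p \<in> perms n" "1 \<le> i" "i \<le> Suc n" "j - 1 \<le> n"
  shows "recoils (rho i j p) - {i - 1, i} = shift (i - 1) ` (recoils p - {i - 1})"
proof (intro set_eqI iffI)
  fix s
  assume s: "s \<in> recoils (rho i j p) - {i - 1, i}"
  let ?r = "unshift (i - 1) s"
  have "s = shift (i - 1) ?r" "?r \<noteq> i - 1"
    using s assms(2) by (auto simp: shift_def unshift_def)
  then have "?r \<in> recoils p - {i - 1}"
    using s shift_mem_recoils_rho[OF assms, of ?r] by auto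
  then show "s \<in> shift (i - 1) ` (recoils p - {i - 1})"
    using \<open>s = shift (i - 1) ?r\<close> by (rule rev_image_eqI)
next
  fix s
  assume "s \<in> shift (i - 1) ` (recoils p - {i - 1})"
  then obtain r where "r \<in> recoils p" "r \<noteq> i - 1" "s = shift (i - 1) r"
    by auto
  then show "s \<in> recoils (rho i j p) - {i - 1, i}"
    using shift_mem_recoils_rho[OF assms] assms(2) by (auto simp: shift_def)
qed

lemma card_recoils_rho:
  assumes "p \<in> perms n" "1 \<le> i" "i \<le> Suc n" "j - 1 \<le> n"
  shows "card (recoils (rho i j p)) = card (recoils p - {i - 1}) + card (recoils (rho i j p) \<inter> {i - 1, i})"
proof -
  have "inj_on (shift (i - 1)) (recoils p - {i - 1})"
    by (simp add: inj_on_def)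
  then have "card (recoils (rho i j p) - {i - 1, i}) = card (recoils p - {i - 1})"
    unfolding recoils_rho[OF assms] by (rule card_image)
  then show ?thesis
    using card_Int_Diff[OF finite_recoils, of "rho i j p" "{i - 1, i}"] by simp
qed

lemma card_recoils_rho_front:
  assumes "p \<in> perms n" "1 \<le> i" "i \<le> Suc n"
  shows "card (recoils (rho i 1 p)) = card (recoils p - {i - 1}) + (if i = 1 then 0 else 1)"
proof -
  let ?\<sigma> = "rho i 1 p"
  have \<sigma>_perm: "?\<sigma> \<in> perms (Suc n)"
    using rho_in_perms[OF assms] .
  have "?\<sigma> ! 0 = i"
    by (simp add: rho_front)
  then have "i \<notin> recoils ?\<sigma>"
    using not_appears_after_hd[of ?\<sigma>] \<sigma>_perm by (auto simp: recoils_conv perms_def)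
  moreover have "i - 1 \<in> recoils ?\<sigma> \<longleftrightarrow> i \<noteq> 1"
  proof
    assume "i \<noteq> 1"
    moreover have "set ?\<sigma> = {1..Suc n}"
      using \<sigma>_perm by (simp only: perms_def mem_Collect_eq)
    ultimately have "appears_after ?\<sigma> (i - 1) (?\<sigma> ! 0)"
      using assms \<open>?\<sigma> ! 0 = i\<close> by (intro appears_after_hd) auto
    then show "i - 1 \<in> recoils ?\<sigma>"
      using \<open>i \<noteq> 1\<close> \<open>?\<sigma> ! 0 = i\<close> assms length_perm[OF assms(1)] by (auto simp: recoils_conv)
  qed (auto simp: recoils_conv)
  ultimately have "recoils ?\<sigma> \<inter> {i - 1, i} = (if i = 1 then {} else {i - 1})"
    by auto
  then show ?thesis
    using card_recoils_rho[OF assms, of 1] by simp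
qed


section \<open>The operators \<open>\<psi>\<close>\<close>

lemma hd_perm_bounds: "p \<in> perms n \<Longrightarrow> p \<noteq> [] \<Longrightarrow> 1 \<le> hd p \<and> hd p \<le> n"
  using hd_in_set[of p] by (auto simp: perms_def)

lemma psi_SomeE:
  assumes "psi x p = Some \<sigma>"
  obtains (L1) "x = L1" "rectangular p" "\<sigma> = rho 1 1 p"
  | (L2) "x = L2" "rectangular p" "p \<noteq> []" "hd p \<noteq> 1" "\<sigma> = rho 1 2 p"
  | (Lu) "x = Lu" "rectangular p" "p \<noteq> []" "hd p \<noteq> 1" "\<sigma> = rho (hd p) 1 p"
  | (Ld) "x = Ld" "rectangular p" "p \<noteq> []" "\<sigma> = rho (hd p + 1) 1 p"
  using assms by (cases x) (auto simp: Suc_le_eq split: if_splits)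

lemma psi_in_perms:
  assumes "\<pi> \<in> perms n" "psi x \<pi> = Some \<sigma>"
  shows "\<sigma> \<in> perms (Suc n)"
  using assms(2)
proof (cases rule: psi_SomeE)
  case Lu
  then show ?thesis
    using rho_in_perms[OF assms(1)] hd_perm_bounds[OF assms(1)] by simp
next
  case Ld
  then show ?thesis
    using rho_in_perms[OF assms(1)] hd_perm_bounds[OF assms(1)] by simp
qed (use rho_in_perms[OF assms(1)] in simp_all)

lemma psi_rectangular:
  assumes "\<pi> \<in> perms n" "psi x \<pi> = Some \<sigma>"
  shows "rectangular \<sigma>"
  using assms(2)
proof (cases rule: psi_SomeE)
  case L1
  then show ?thesis
    using rectangular_rho_one[OF assms(1), of 1] by simp
next
  case L2
  then show ?thesis
    using rectangular_rho_one[OF assms(1), of 2] length_perm[OF assms(1)] by (auto simp: Suc_le_eq)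
next
  case Lu
  then obtain a q where "\<pi> = a # q"
    by (cases \<pi>) auto
  then show ?thesis
    using Lu rectangular_rho_consecutive[OF assms(1), of a] hd_perm_bounds[OF assms(1)]
    by (simp add: rho_front shift_def)
next
  case Ld
  then obtain a q where "\<pi> = a # q"
    by (cases \<pi>) auto
  then show ?thesis
    using Ld rectangular_rho_consecutive[OF assms(1), of "a + 1"] hd_perm_bounds[OF assms(1)]
    by (simp add: rho_front shift_def)
qed

lemma hd_notin_recoils: "distinct p \<Longrightarrow> p \<noteq> [] \<Longrightarrow> hd p \<notin> recoils p"
  using not_appears_after_hd[of p] by (auto simp: recoils_conv hd_conv_nth)

lemma hd_minus_one_mem_recoils:
  assumes "p \<in> perms n" "p \<noteq> []" "2 \<le> hd p"
  shows "hd p - 1 \<in> recoils p"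
proof -
  have "appears_after p (hd p - 1) (p ! 0)"
    using assms hd_perm_bounds[OF assms(1,2)] by (intro appears_after_hd) (auto simp: perms_def hd_conv_nth)
  then show ?thesis
    using assms hd_perm_bounds[OF assms(1,2)] length_perm[OF assms(1)]
    by (auto simp: recoils_conv hd_conv_nth)
qed

lemma card_recoils_rho_second:
  assumes "p \<in> perms n" "p \<noteq> []" "hd p \<noteq> 1"
  shows "card (recoils (rho 1 2 p)) = card (recoils p)"
proof -
  obtain a q where p: "p = a # q"
    using assms(2) by (cases p) auto
  then have "rho 1 2 p = (a + 1) # 1 # map (shift 1) q" "2 \<le> a"
    using assms hd_perm_bounds[OF assms(1,2)] by (auto simp: rho_2_Cons shift_def)
  then have "\<not> appears_after (rho 1 2 p) 1 (1 + 1)"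
    using distinct_rho[of 1 2 p] assms(1)
    by (auto simp: appears_after_def perms_def nth_Cons' nth_eq_iff_index_eq split: if_splits)
  then have "recoils (rho 1 2 p) \<inter> {0, 1} = {}"
    by (auto simp: recoils_conv)
  then show ?thesis
    using card_recoils_rho[OF assms(1), of 1 2] length_perm[OF assms(1)] p
    by (simp add: zero_notin_recoils)
qed

text \<open>By \<open>card_recoils_rho_front\<close> the new first entry \<open>i\<close> brings the recoil \<open>i - 1\<close> unless
  \<open>i = 1\<close>; for \<open>\<psi>\<^sub>u\<close> it was already a recoil of \<open>\<pi>\<close>, for \<open>\<psi>\<^sub>d\<close> it was not.\<close>

lemma card_recoils_psi:
  assumes "\<pi> \<in> perms n" "psi x \<pi> = Some \<sigma>"
  shows "card (recoils \<sigma>) = card (recoils \<pi>) + (if x = Ld then 1 else 0)"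
  using assms(2)
proof (cases rule: psi_SomeE)
  case L1
  then show ?thesis
    using card_recoils_rho_front[OF assms(1), of 1] by (simp add: zero_notin_recoils)
next
  case L2
  then show ?thesis
    using card_recoils_rho_second[OF assms(1)] by simp
next
  case Lu
  then have "hd \<pi> - 1 \<in> recoils \<pi>" "2 \<le> hd \<pi>" "hd \<pi> \<le> n"
    using hd_minus_one_mem_recoils[OF assms(1)] hd_perm_bounds[OF assms(1)] by auto
  then show ?thesis
    using Lu card_recoils_rho_front[OF assms(1), of "hd \<pi>"] card_Suc_Diff1[OF finite_recoils]
    by simp
next
  case Ld
  then have "hd \<pi> \<notin> recoils \<pi>"
    using hd_notin_recoils assms(1) by (simp add: perms_def)
  then show ?thesis
    using Ld card_recoils_rho_front[OF assms(1), of "hd \<pi> + 1"] hd_perm_bounds[OF assms(1)] by simp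
qed

definition head_letter :: "nat list \<Rightarrow> letter" where
  "head_letter \<sigma> =
     (if \<sigma> ! 0 = 1 then L1 else if \<sigma> ! 0 = \<sigma> ! 1 + 1 then Ld
      else if \<sigma> ! 1 = \<sigma> ! 0 + 1 then Lu else L2)"

lemma head_letter_psi:
  assumes "\<pi> \<in> perms n" "psi x \<pi> = Some \<sigma>"
  shows "head_letter \<sigma> = x"
  using assms(2)
proof (cases rule: psi_SomeE)
  case L1
  then show ?thesis
    by (simp add: head_letter_def rho_front)
next
  case L2
  then obtain a q where "\<pi> = a # q" "1 \<le> a"
    using hd_perm_bounds[OF assms(1)] by (cases \<pi>) auto
  then show ?thesis
    using L2 by (simp add: head_letter_def rho_2_Cons shift_def)
next
  case Lu
  then obtain a q where "\<pi> = a # q"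
    by (cases \<pi>) auto
  then show ?thesis
    using Lu by (simp add: head_letter_def rho_front shift_def)
next
  case Ld
  then obtain a q where "\<pi> = a # q" "1 \<le> a"
    using hd_perm_bounds[OF assms(1)] by (cases \<pi>) auto
  then show ?thesis
    using Ld by (simp add: head_letter_def rho_front shift_def)
qed

definition psi_position :: "letter \<Rightarrow> nat" where
  "psi_position x = (if x = L2 then 2 else 1)"

lemma psi_eq_rho:
  assumes "psi x p = Some \<sigma>"
  shows "\<exists>i. \<sigma> = rho i (psi_position x) p \<and> psi_position x - 1 \<le> length p"
  using assms by (cases rule: psi_SomeE) (auto simp: psi_position_def Suc_le_eq)

lemma psi_inj:
  assumes "\<pi> \<in> perms n" "\<pi>' \<in> perms n" "psi x \<pi> = Some \<sigma>" "psi y \<pi>' = Some \<sigma>"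
  shows "x = y \<and> \<pi> = \<pi>'"
proof
  show "x = y"
    using head_letter_psi[OF assms(1,3)] head_letter_psi[OF assms(2,4)] by simp
  obtain i i' where "rho i (psi_position x) \<pi> = rho i' (psi_position x) \<pi>'"
    and "psi_position x - 1 \<le> length \<pi>"
    using psi_eq_rho[OF assms(3)] psi_eq_rho[OF assms(4)] \<open>x = y\<close> by metis
  then show "\<pi> = \<pi>'"
    using rho_inj length_perm[OF assms(1)] length_perm[OF assms(2)] by metis
qed

text \<open>Otherwise the values 1 and \<open>min (\<sigma> ! 0) (\<sigma> ! 1) + 1\<close> occur later in \<open>\<sigma>\<close> and form a
  crossing with its first two entries.\<close>

lemma rectangular_head_cases:
  assumes "\<sigma> \<in> perms m" "2 \<le> m" "rectangular \<sigma>"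
  shows "\<sigma> ! 0 = 1 \<or> \<sigma> ! 1 = 1 \<or> \<sigma> ! 0 = \<sigma> ! 1 + 1 \<or> \<sigma> ! 1 = \<sigma> ! 0 + 1"
proof (rule ccontr)
  assume heads: "\<not> ?thesis"
  define lo where "lo = min (\<sigma> ! 0) (\<sigma> ! 1)"
  have "1 \<le> \<sigma> ! 0" "1 \<le> \<sigma> ! 1" "\<sigma> ! 0 \<noteq> \<sigma> ! 1" "\<sigma> ! 0 \<le> m" "\<sigma> ! 1 \<le> m"
    using perm_nth_bounds[OF assms(1)] perm_nth_eq_iff[OF assms(1), of 0 1] assms(2) by auto
  then have lo: "2 \<le> lo" "lo + 1 < max (\<sigma> ! 0) (\<sigma> ! 1)" "lo + 1 \<le> m"
    using heads unfolding lo_def by auto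
  obtain q1 where q1: "q1 < m" "\<sigma> ! q1 = 1"
    using perm_obtain_index[OF assms(1), of 1] assms(2) by auto
  obtain q2 where q2: "q2 < m" "\<sigma> ! q2 = lo + 1"
    using perm_obtain_index[OF assms(1), of "lo + 1"] lo by auto
  have distinct_positions: "q1 \<noteq> 0" "q1 \<noteq> 1" "q2 \<noteq> 0" "q2 \<noteq> 1" "q2 \<noteq> q1"
    by (rule notI, use q1 q2 lo heads in \<open>simp add: lo_def min_def split: if_splits\<close>)+
  have cross: "crossing (\<sigma> ! 0) (\<sigma> ! 1) (\<sigma> ! q1) (\<sigma> ! q2)"
    "crossing (\<sigma> ! 0) (\<sigma> ! 1) (\<sigma> ! q2) (\<sigma> ! q1)"
    using q1 q2 lo unfolding crossing_def lo_def by auto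
  have "has_crossing \<sigma>"
  proof (cases "q1 < q2")
    case True
    then show ?thesis
      using distinct_positions cross q1 q2 length_perm[OF assms(1)] unfolding has_crossing_def
      by (intro exI[of _ 0] exI[of _ 1] exI[of _ q1] exI[of _ q2]) auto
  next
    case False
    then show ?thesis
      using distinct_positions cross q1 q2 length_perm[OF assms(1)] unfolding has_crossing_def
      by (intro exI[of _ 0] exI[of _ 1] exI[of _ q2] exI[of _ q1]) auto
  qed
  then show False
    using assms(3) rectangular_iff_no_crossing by blast
qed

lemma ex_rectangular_rho_eq:
  assumes "\<sigma> \<in> perms (Suc n)" "rectangular \<sigma>" "1 \<le> j" "j \<le> Suc n"
  obtains p where "p \<in> perms n" "rectangular p" "rho (\<sigma> ! (j - 1)) j p = \<sigma>"
proof -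
  obtain p where p: "length p = n" "rho (\<sigma> ! (j - 1)) j p = \<sigma>"
    using ex_rho_eq[OF assms(1,3,4)] by auto
  then have "p \<in> perms n"
    using in_perms_if_rho assms(1) by metis
  moreover have "rectangular p"
    using rectangular_unrho[of "\<sigma> ! (j - 1)" j p] p assms by auto
  ultimately show ?thesis
    using that p by blast
qed

lemma ex_psi_consecutive_front:
  assumes "\<sigma> \<in> perms (Suc n)" "rectangular \<sigma>" "1 \<le> n" "\<sigma> ! 0 \<noteq> 1"
    and "\<sigma> ! 0 = \<sigma> ! 1 + 1 \<or> \<sigma> ! 1 = \<sigma> ! 0 + 1"
  shows "\<exists>x \<pi>. \<pi> \<in> perms n \<and> psi x \<pi> = Some \<sigma>"
proof -
  obtain p where p: "p \<in> perms n" "rectangular p" "rho (\<sigma> ! 0) 1 p = \<sigma>"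
    using ex_rectangular_rho_eq[OF assms(1,2), of 1] by auto
  then obtain a q where "p = a # q"
    using assms(3) length_perm[OF p(1)] by (cases p) auto
  then have "\<sigma> ! 1 = shift (\<sigma> ! 0) a"
    using arg_cong[OF p(3), of "\<lambda>l. l ! 1"] by (simp add: rho_front)
  then have "psi Ld p = Some \<sigma> \<or> psi Lu p = Some \<sigma>"
    using assms(4,5) p \<open>p = a # q\<close> by (auto simp: shift_def split: if_splits)
  then show ?thesis
    using p(1) by blast
qed

lemma ex_psi_2:
  assumes "\<sigma> \<in> perms (Suc n)" "rectangular \<sigma>" "1 \<le> n" "\<sigma> ! 1 = 1" "\<sigma> ! 0 \<noteq> 2"
  shows "\<exists>\<pi>. \<pi> \<in> perms n \<and> psi L2 \<pi> = Some \<sigma>"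
proof -
  obtain p where p: "p \<in> perms n" "rectangular p" "rho (\<sigma> ! 1) 2 p = \<sigma>"
    using ex_rectangular_rho_eq[OF assms(1,2), of 2] assms(3) by auto
  then obtain a q where "p = a # q" "1 \<le> a"
    using assms(3) hd_perm_bounds[OF p(1)] length_perm[OF p(1)] by (cases p) auto
  then have "\<sigma> ! 0 = a + 1"
    using p(3) assms(4) by (auto simp: rho_2_Cons shift_def)
  then show ?thesis
    using p assms(4,5) \<open>p = a # q\<close> by auto
qed

lemma psi_surj:
  assumes "\<sigma> \<in> perms (Suc n)" "rectangular \<sigma>"
  shows "\<exists>x \<pi>. \<pi> \<in> perms n \<and> psi x \<pi> = Some \<sigma>"
proof (cases "\<sigma> ! 0 = 1")
  case True
  obtain p where "p \<in> perms n" "rectangular p" "rho (\<sigma> ! 0) 1 p = \<sigma>"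
    using ex_rectangular_rho_eq[OF assms, of 1] by auto
  then show ?thesis
    using True by (intro exI[of _ L1] exI[of _ p]) simp
next
  case False
  have "1 \<le> \<sigma> ! 0" "\<sigma> ! 0 \<le> Suc n"
    using perm_nth_bounds[OF assms(1), of 0] by auto
  then have "1 \<le> n"
    using False by auto
  then have "\<sigma> ! 1 = 1 \<or> \<sigma> ! 0 = \<sigma> ! 1 + 1 \<or> \<sigma> ! 1 = \<sigma> ! 0 + 1"
    using rectangular_head_cases[OF assms(1) _ assms(2)] False by auto
  then show ?thesis
    using ex_psi_consecutive_front[OF assms \<open>1 \<le> n\<close> False] ex_psi_2[OF assms \<open>1 \<le> n\<close>] by fastforce
qed


section \<open>Words\<close>

lemma eval_word_SomeD:
  "eval_word w = Some p \<Longrightarrow>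
     p \<in> perms (length w) \<and> rectangular p \<and> card (recoils p) = count_list w Ld"
proof (induction w arbitrary: p)
  case Nil
  then show ?case
    by (simp add: perms_0 rectangular_iff_no_crossing has_crossing_def recoils_conv)
next
  case (Cons x w)
  then obtain \<pi> where \<pi>: "eval_word w = Some \<pi>" "psi x \<pi> = Some p"
    by (cases "eval_word w") auto
  with Cons.IH have "\<pi> \<in> perms (length w)" "card (recoils \<pi>) = count_list w Ld"
    by auto
  then show ?case
    using \<pi>(2) psi_in_perms psi_rectangular card_recoils_psi by auto
qed

lemma eval_word_inj:
  "eval_word w = Some p \<Longrightarrow> eval_word w' = Some p \<Longrightarrow> length w = length w' \<Longrightarrow> w = w'"
proof (induction w arbitrary: w' p)
  case (Cons x w)
  then obtain y v where w': "w' = y # v"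
    by (cases w') auto
  obtain \<pi> where \<pi>: "eval_word w = Some \<pi>" "psi x \<pi> = Some p"
    using Cons.prems(1) by (cases "eval_word w") auto
  obtain \<pi>' where \<pi>': "eval_word v = Some \<pi>'" "psi y \<pi>' = Some p"
    using Cons.prems(2) w' by (cases "eval_word v") auto
  have "length v = length w"
    using Cons.prems(3) w' by simp
  then have "\<pi> \<in> perms (length w)" "\<pi>' \<in> perms (length w)"
    using eval_word_SomeD[OF \<pi>(1)] eval_word_SomeD[OF \<pi>'(1)] by auto
  then have "x = y" "\<pi> = \<pi>'"
    using psi_inj \<pi>(2) \<pi>'(2) by blast+
  then show ?case
    using Cons.IH[OF \<pi>(1)] \<pi>'(1) \<open>length v = length w\<close> w' by simp
qed simp

lemma eval_word_surj: "p \<in> perms n \<Longrightarrow> rectangular p \<Longrightarrow> \<exists>w. length w = n \<and> eval_word w = Some p"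
proof (induction n arbitrary: p)
  case 0
  then show ?case
    by (intro exI[of _ "[]"]) (simp add: perms_0)
next
  case (Suc n)
  then obtain x \<pi> where \<pi>: "\<pi> \<in> perms n" "psi x \<pi> = Some p"
    using psi_surj by blast
  then have "rectangular \<pi>"
    by (auto elim: psi_SomeE)
  then obtain w where "length w = n" "eval_word w = Some \<pi>"
    using Suc.IH \<pi>(1) by blast
  then show ?case
    using \<pi>(2) by (intro exI[of _ "x # w"]) simp
qed

theorem corollary4p5:
  fixes n k :: nat
  assumes "n \<ge> 1"
  shows "bij_betw (\<lambda>w. the (eval_word w))
           {w \<in> L_Rect. length w = n \<and> count_list w Ld = k}
           {p \<in> perms n. rectangular p \<and> card (recoils p) = k}"
proof (rule bij_betw_imageI)
  show "inj_on (\<lambda>w. the (eval_word w)) {w \<in> L_Rect. length w = n \<and> count_list w Ld = k}"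
    by (rule inj_onI) (auto simp: L_Rect_def intro: eval_word_inj)
  show "(\<lambda>w. the (eval_word w)) ` {w \<in> L_Rect. length w = n \<and> count_list w Ld = k}
        = {p \<in> perms n. rectangular p \<and> card (recoils p) = k}"
  proof (intro set_eqI iffI)
    fix p
    assume p: "p \<in> {p \<in> perms n. rectangular p \<and> card (recoils p) = k}"
    then obtain w where "length w = n" "eval_word w = Some p"
      using eval_word_surj by blast
    then show "p \<in> (\<lambda>w. the (eval_word w)) ` {w \<in> L_Rect. length w = n \<and> count_list w Ld = k}"
      using p eval_word_SomeD assms by (force simp: L_Rect_def)
  qed (auto simp: L_Rect_def dest: eval_word_SomeD)
qed

end
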